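(* Let $\mathbb{S}^1=\mathbb{R}/\mathbb{Z}$ and consider $u_t+H(u)_x=0$ on $\mathbb{S}^1\times\mathbb{R}^+$, $u(x,0)=u_0(x)$, with $H$ locally Lipschitz, $u>a>0$, $f(u)=H(u)/u$, $f^+=\max(f,0)$, $f^-=\max(-f,0)$ (possibly shifted by a constant $k\ge0$). Let $u(x,t,\epsilon)$ solve $$\partial_t u_\epsilon=\frac1\epsilon\Big[u_{\epsilon-1}f^+(\hat u_{\epsilon-1/2})-u_\epsilon f^+(\hat u_{\epsilon+1/2})-u_\epsilon f^-(\hat u_{\epsilon-1/2})+u_{\epsilon+1}f^-(\hat u_{\epsilon+1/2})\Big],\qquad u(x,0,\epsilon)=u_0(x),$$ where $u_\epsilon=u(x,t,\epsilon)$, $u_{\epsilon\pm1}=u(x\pm\epsilon,t,\epsilon)$ and $\hat u_{\epsilon\pm1/2}$ are reconstructed states (Lipschitz functions of finitely many shifted values of $u$ reproducing constants), and assume $|u(x,t,\epsilon)|\le\bar M:=\|u_0\|_\infty$. Let $\phi\in C^1(\mathbb{S}^1)$. Then for all $\Delta t>0$, $$\int_{\mathbb{S}^1}\big(u(x,t+\Delta t,\epsilon)-u(x,t,\epsilon)\big)\phi(x)\,dx\le N\,\|\nabla\phi\|_\infty\,\Delta t\,\mu(\mathbb{S}^1),$$ where $\mu(\mathbb{S}^1)$ is the measure of $\mathbb{S}^1$ and $N=\max_{|u|\le\bar M}\big(|u|(|f^+(\hat u)|+|f^-(\hat u)|)\big)$, with $\hat u$ denoting the corresponding reconstructed state. 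*)

theory Defs
  imports "HOL-Analysis.Analysis"
begin

definition flux_f :: "(real \<Rightarrow> real) \<Rightarrow> real \<Rightarrow> real" where
  "flux_f H w = H w / w"

definition fplus :: "(real \<Rightarrow> real) \<Rightarrow> real \<Rightarrow> real \<Rightarrow> real" where
  "fplus H k w = max (flux_f H w) 0 + k"

definition fminus :: "(real \<Rightarrow> real) \<Rightarrow> real \<Rightarrow> real \<Rightarrow> real" where
  "fminus H k w = max (- flux_f H w) 0 + k"

text \<open>Reconstruction: R applied to the values of u at the stencil offsets S
  (x + j*eps for j in S). Interface state at x+eps/2.\<close>

definition recon_plus ::
  "(real list \<Rightarrow> real) \<Rightarrow> int list \<Rightarrow> real \<Rightarrow> (real \<Rightarrow> real) \<Rightarrow> real \<Rightarrow> real" where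
  "recon_plus R S eps v x = R (map (\<lambda>j. v (x + of_int j * eps)) S)"

definition admissible_recon :: "(real list \<Rightarrow> real) \<Rightarrow> int list \<Rightarrow> bool" where
  "admissible_recon R S \<longleftrightarrow>
     (\<exists>L. \<forall>xs ys. length xs = length S \<longrightarrow> length ys = length S \<longrightarrow>
        \<bar>R xs - R ys\<bar> \<le> L * (\<Sum>i<length S. \<bar>xs ! i - ys ! i\<bar>)) \<and>
     (\<forall>c. R (replicate (length S) c) = c)"

definition loc_lipschitz :: "(real \<Rightarrow> real) \<Rightarrow> bool" where
  "loc_lipschitz H \<longleftrightarrow> (\<forall>x. \<exists>e>0. \<exists>L. L-lipschitz_on (ball x e) H)"

definition sup_norm :: "(real \<Rightarrow> real) \<Rightarrow> real" where
  "sup_norm g = Sup (range (\<lambda>x. \<bar>g x\<bar>))"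

definition N_set :: "(real \<Rightarrow> real) \<Rightarrow> real \<Rightarrow> (real list \<Rightarrow> real) \<Rightarrow> int list \<Rightarrow> real \<Rightarrow> real set" where
  "N_set H k R S M = {\<bar>v\<bar> * (\<bar>fplus H k (R xs)\<bar> + \<bar>fminus H k (R xs)\<bar>) | v xs.
      \<bar>v\<bar> \<le> M \<and> length xs = length S \<and> (\<forall>y\<in>set xs. \<bar>y\<bar> \<le> M)}"

end

theory Submission
  imports Defs "HOL-Library.Periodic_Fun"
begin

text \<open>The scheme is in conservation form: its right-hand side is (G(x - eps) - G(x))/eps for the
  numerical flux G(x) = u(x) f+(w) - u(x + eps) f-(w) through the interface x + eps/2, where w is
  the reconstructed state there, and the triangle inequality gives |G| <= N. Testing with the
  periodic phi and shifting the first term by one cell turns the time derivative of the integral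
  of u phi into the integral of G(x) (phi(x + eps) - phi(x))/eps, which is at most N sup|phi'|.
  Since |u_t| <= 2N/eps, the derivative may be taken under the integral sign, and the mean value
  theorem bounds the increment.\<close>

lemma measurable_map_count_space:
  fixes h :: "'b \<Rightarrow> 'a \<Rightarrow> 'c::countable"
  assumes "\<And>j. h j \<in> measurable M (count_space UNIV)"
  shows "(\<lambda>x. map (\<lambda>j. h j x) S) \<in> measurable M (count_space UNIV)"
proof (induction S)
  case Nil
  then show ?case by simp
next
  case (Cons j S)
  show ?case
    using measurable_Pair[OF assms[of j] Cons]
      measurable_compose[of _ M "count_space UNIV \<Otimes>\<^sub>M count_space UNIV" "\<lambda>(a, l). a # l" "count_space UNIV"]
    by (auto simp: case_prod_unfold)
qed

lemma abs_floor_div_approx: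
  fixes c y :: real
  assumes "c > 0"
  shows "\<bar>of_int \<lfloor>c * y\<rfloor> / c - y\<bar> \<le> 1 / c"
proof -
  have "\<bar>of_int \<lfloor>c * y\<rfloor> - c * y\<bar> \<le> 1" by linarith
  moreover have "of_int \<lfloor>c * y\<rfloor> / c - y = (of_int \<lfloor>c * y\<rfloor> - c * y) / c"
    using assms by (simp add: field_simps)
  ultimately show ?thesis using assms by (simp add: abs_divide divide_right_mono)
qed

text \<open>The roundings of the arguments to the grid \<open>1/(m+1)\<close> take countably many values, so
  \<open>R\<close> of them is measurable; by the Lipschitz bound these converge to \<open>R\<close> of the arguments.\<close>

lemma borel_measurable_Lipschitz_list_fun:
  fixes R :: "real list \<Rightarrow> real" and v :: "'b \<Rightarrow> 'a \<Rightarrow> real"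
  assumes lip: "\<And>xs ys. length xs = length S \<Longrightarrow> length ys = length S \<Longrightarrow>
      \<bar>R xs - R ys\<bar> \<le> L * (\<Sum>i<length S. \<bar>xs ! i - ys ! i\<bar>)"
    and v: "\<And>j. v j \<in> borel_measurable M"
  shows "(\<lambda>x. R (map (\<lambda>j. v j x) S)) \<in> borel_measurable M"
proof (rule borel_measurable_LIMSEQ_real)
  define c where "c m = real (Suc m)" for m
  have c_pos: "c m > 0" for m by (simp add: c_def)
  define rd where "rd m x = map (\<lambda>j. \<lfloor>c m * v j x\<rfloor>) S" for m x
  show "(\<lambda>x. R (map (\<lambda>z. of_int z / c m) (rd m x))) \<in> borel_measurable M" for m
  proof (rule measurable_compose_countable[where f = "\<lambda>l x. R (map (\<lambda>z. of_int z / c m) l)"])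
    show "rd m \<in> measurable M (count_space UNIV)"
      unfolding rd_def by (intro measurable_map_count_space measurable_compose[OF _ measurable_real_floor]
          borel_measurable_times borel_measurable_const v)
  qed simp
  fix x
  let ?err = "\<lambda>m. \<bar>L\<bar> * real (length S) * inverse (real (Suc m))"
  have err: "norm (R (map (\<lambda>z. of_int z / c m) (rd m x)) - R (map (\<lambda>j. v j x) S)) \<le> ?err m" for m
  proof -
    have "\<bar>R (map (\<lambda>z. of_int z / c m) (rd m x)) - R (map (\<lambda>j. v j x) S)\<bar>
        \<le> L * (\<Sum>i<length S. \<bar>of_int \<lfloor>c m * v (S ! i) x\<rfloor> / c m - v (S ! i) x\<bar>)"
      using lip[of "map (\<lambda>z. of_int z / c m) (rd m x)" "map (\<lambda>j. v j x) S"] by (simp add: rd_def)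
    also have "\<dots> \<le> \<bar>L\<bar> * (\<Sum>i<length S. \<bar>of_int \<lfloor>c m * v (S ! i) x\<rfloor> / c m - v (S ! i) x\<bar>)"
      by (intro mult_right_mono) (auto intro: sum_nonneg)
    also have "\<dots> \<le> \<bar>L\<bar> * (\<Sum>i<length S. 1 / c m)"
      by (intro mult_left_mono sum_mono abs_floor_div_approx c_pos) auto
    finally show ?thesis by (simp add: c_def divide_inverse)
  qed
  have "(\<lambda>m. R (map (\<lambda>z. of_int z / c m) (rd m x)) - R (map (\<lambda>j. v j x) S)) \<longlonglongrightarrow> 0"
    by (rule Lim_null_comparison[OF always_eventually[OF allI[OF err]]])
      (intro tendsto_mult_right_zero LIMSEQ_inverse_real_of_nat)
  then show "(\<lambda>m. R (map (\<lambda>z. of_int z / c m) (rd m x))) \<longlonglongrightarrow> R (map (\<lambda>j. v j x) S)"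
    by (simp add: LIM_zero_iff)
qed

lemma loc_lipschitz_imp_continuous_on: "loc_lipschitz H \<Longrightarrow> continuous_on UNIV H"
proof (intro continuous_at_imp_continuous_on ballI)
  fix x :: real
  assume "loc_lipschitz H"
  then obtain e L where "e > 0" "L-lipschitz_on (ball x e) H"
    unfolding loc_lipschitz_def by blast
  then show "isCont H x"
    using continuous_on_interior[OF lipschitz_on_continuous_on] by (metis centre_in_ball interior_ball)
qed

definition num_flux ::
  "(real \<Rightarrow> real) \<Rightarrow> real \<Rightarrow> (real list \<Rightarrow> real) \<Rightarrow> int list \<Rightarrow> real \<Rightarrow> (real \<Rightarrow> real) \<Rightarrow> real \<Rightarrow> real"
  where "num_flux H k R S eps v x =
    v x * fplus H k (recon_plus R S eps v x) - v (x + eps) * fminus H k (recon_plus R S eps v x)"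

lemma borel_measurable_num_flux:
  assumes "loc_lipschitz H" "admissible_recon R S" "v \<in> borel_measurable borel"
  shows "num_flux H k R S eps v \<in> borel_measurable borel"
proof -
  have [measurable]: "H \<in> borel_measurable borel"
    using assms(1) by (intro borel_measurable_continuous_onI loc_lipschitz_imp_continuous_on)
  have [measurable]: "v \<in> borel_measurable borel" by (fact assms(3))
  have [measurable]: "recon_plus R S eps v \<in> borel_measurable borel"
    using assms(2) unfolding admissible_recon_def recon_plus_def
    by (auto intro!: borel_measurable_Lipschitz_list_fun[where v = "\<lambda>j x. v (x + of_int j * eps)"])
  show ?thesis
    unfolding num_flux_def[abs_def] fplus_def fminus_def flux_f_def by measurable
qed

lemma num_flux_periodic:
  assumes "\<And>x. v (x + 1) = v x"
  shows "num_flux H k R S eps v (x + 1) = num_flux H k R S eps v x"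
proof -
  have "v (x + 1 + y) = v (x + y)" for y
    using assms[of "x + y"] by (simp add: add_ac)
  then show ?thesis by (simp add: num_flux_def recon_plus_def assms)
qed

lemma abs_num_flux_le:
  assumes v_bound: "\<And>y. \<bar>v y\<bar> \<le> M" and bdd: "bdd_above (N_set H k R S M)"
  shows "\<bar>num_flux H k R S eps v x\<bar> \<le> Sup (N_set H k R S M)"
proof -
  let ?xs = "map (\<lambda>j. v (x + of_int j * eps)) S"
  let ?m = "max \<bar>v x\<bar> \<bar>v (x + eps)\<bar>"
  let ?p = "fplus H k (R ?xs)" and ?n = "fminus H k (R ?xs)"
  have "\<bar>num_flux H k R S eps v x\<bar> \<le> \<bar>v x\<bar> * \<bar>?p\<bar> + \<bar>v (x + eps)\<bar> * \<bar>?n\<bar>"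
    unfolding num_flux_def recon_plus_def abs_mult[symmetric] by (rule abs_triangle_ineq4)
  also have "\<dots> \<le> \<bar>?m\<bar> * (\<bar>?p\<bar> + \<bar>?n\<bar>)"
    by (simp add: distrib_left add_mono mult_right_mono)
  also have "\<dots> \<le> Sup (N_set H k R S M)"
  proof (rule cSup_upper[OF _ bdd])
    have "\<bar>?m\<bar> \<le> M" "\<forall>y\<in>set ?xs. \<bar>y\<bar> \<le> M" using v_bound by auto
    then show "\<bar>?m\<bar> * (\<bar>?p\<bar> + \<bar>?n\<bar>) \<in> N_set H k R S M"
      unfolding N_set_def by (intro CollectI exI[of _ ?m] exI[of _ ?xs]) simp
  qed
  finally show ?thesis .
qed

lemma set_integrable_bounded_Icc:
  fixes f :: "real \<Rightarrow> real"
  assumes "f \<in> borel_measurable borel" and "\<And>x. x \<in> {a..b} \<Longrightarrow> \<bar>f x\<bar> \<le> B"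
  shows "set_integrable lborel {a..b} f"
  unfolding set_integrable_def
  by (rule integrableI_bounded_set[where A="{a..b}" and B=B])
     (use assms in \<open>auto simp: measurable_lborel1 indicator_def emeasure_lborel_Icc_eq\<close>)

lemma integrable_on_bounded_Icc:
  fixes f :: "real \<Rightarrow> real"
  assumes "f \<in> borel_measurable borel" and "\<And>x. \<bar>f x\<bar> \<le> B"
  shows "f integrable_on {a..b}"
  using assms by (intro set_borel_integral_eq_integral(1) set_integrable_bounded_Icc)

lemma periodic_abs_le_sup_norm:
  fixes g :: "real \<Rightarrow> real"
  assumes per: "\<And>x. g (x + 1) = g x" and cont: "continuous_on UNIV g"
  shows "\<bar>g x\<bar> \<le> sup_norm g"
proof -
  interpret g: periodic_fun_simple' g by standard (fact per)
  have "bounded (g ` {0..1})"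
    by (intro compact_imp_bounded compact_continuous_image continuous_on_subset[OF cont]) auto
  then obtain B where B: "\<forall>y\<in>{0..1}. \<bar>g y\<bar> \<le> B"
    by (auto simp: bounded_iff)
  have "\<bar>g y\<bar> \<le> B" for y
  proof -
    have "y - of_int \<lfloor>y\<rfloor> \<in> {0..1}" by auto linarith
    moreover have "g y = g (y - of_int \<lfloor>y\<rfloor>)" by (simp add: g.minus_of_int)
    ultimately show ?thesis using B by simp
  qed
  then have "bdd_above (range (\<lambda>y. \<bar>g y\<bar>))" by (intro bdd_aboveI2)
  then show ?thesis unfolding sup_norm_def by (intro cSup_upper) auto
qed

lemma periodic_C1_lipschitz:
  fixes \<phi> \<phi>' :: "real \<Rightarrow> real"
  assumes per: "\<And>x. \<phi> (x + 1) = \<phi> x"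
    and deriv: "\<And>x. (\<phi> has_real_derivative \<phi>' x) (at x)"
    and cont: "continuous_on UNIV \<phi>'"
  shows "(sup_norm \<phi>')-lipschitz_on UNIV \<phi>"
proof -
  have "\<phi>' (x + 1) = \<phi>' x" for x
  proof (rule DERIV_unique[OF _ deriv[of x]])
    show "(\<phi> has_real_derivative \<phi>' (x + 1)) (at x)"
      using DERIV_shift[of \<phi> "\<phi>' (x + 1)" x 1] deriv[of "x + 1"] per by simp
  qed
  then have bound: "\<bar>\<phi>' x\<bar> \<le> sup_norm \<phi>'" for x
    using cont by (rule periodic_abs_le_sup_norm)
  show ?thesis
  proof (rule lipschitz_onI)
    show "dist (\<phi> x) (\<phi> y) \<le> sup_norm \<phi>' * dist x y" for x y
      unfolding dist_real_def real_norm_def[symmetric]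
      by (rule field_differentiable_bound[of UNIV]) (use deriv bound in auto)
    show "0 \<le> sup_norm \<phi>'" using bound[of 0] by linarith
  qed
qed

lemma integral_periodic_Icc:
  fixes g :: "real \<Rightarrow> real"
  assumes per: "\<And>x. g (x + 1) = g x" and int: "\<And>c d. g integrable_on {c..d}"
  shows "integral {a..a+1} g = integral {0..1} g"
proof -
  interpret g: periodic_fun_simple' g by standard (fact per)
  define r where "r = a - of_int \<lfloor>a\<rfloor>"
  have r: "0 \<le> r" "r \<le> 1" unfolding r_def by linarith+
  have "integral {a..a+1} g = integral {r..r+1} (\<lambda>x. g (x + of_int \<lfloor>a\<rfloor>))"
    using integral_shift_real_ivl[of a "of_int \<lfloor>a\<rfloor>" "a+1" g] by (simp add: r_def algebra_simps)
  also have "\<dots> = integral {r..1} g + integral {1..r+1} g"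
    using Henstock_Kurzweil_Integration.integral_combine[of r 1 "r+1" g] r int
    by (simp add: g.plus_of_int)
  also have "integral {1..r+1} g = integral {0..r} g"
    using integral_shift_real_ivl[of 1 1 "r+1" g] by (simp add: per)
  also have "integral {r..1} g + integral {0..r} g = integral {0..1} g"
    using Henstock_Kurzweil_Integration.integral_combine[of 0 r 1 g] r int by simp
  finally show ?thesis .
qed

lemma abs_integral_flux_difference_le:
  fixes G \<psi> :: "real \<Rightarrow> real"
  assumes G_meas: "G \<in> borel_measurable borel" and G_per: "\<And>x. G (x + 1) = G x"
    and G_bound: "\<And>x. \<bar>G x\<bar> \<le> N"
    and \<psi>_per: "\<And>x. \<psi> (x + 1) = \<psi> x" and \<psi>_lip: "P-lipschitz_on UNIV \<psi>"
    and eps: "eps > 0"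
  shows "\<bar>integral {0..1} (\<lambda>x. (G (x - eps) - G x) / eps * \<psi> x)\<bar> \<le> N * P"
proof -
  have \<psi>_cont: "continuous_on UNIV \<psi>" by (rule lipschitz_on_continuous_on[OF \<psi>_lip])
  have [measurable]: "\<psi> \<in> borel_measurable borel" "G \<in> borel_measurable borel"
    using \<psi>_cont G_meas by (auto intro: borel_measurable_continuous_onI)
  have prod_bound: "\<bar>G y * \<psi> z\<bar> \<le> N * sup_norm \<psi>" for y z
    unfolding abs_mult using G_bound \<psi>_cont
    by (intro mult_mono periodic_abs_le_sup_norm[of \<psi>, OF \<psi>_per])
      (auto intro: order_trans[OF abs_ge_zero])
  define g where "g x = G x * \<psi> x" for x
  define g_shift where "g_shift x = G x * \<psi> (x + eps)" for x
  have int: "(\<lambda>x. G (x - eps) * \<psi> x) integrable_on {c..d}"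
      "g integrable_on {c..d}" "g_shift integrable_on {c..d}" for c d
    unfolding g_def g_shift_def
    by (intro integrable_on_bounded_Icc[where B = "N * sup_norm \<psi>"] prod_bound; measurable)+
  have "integral {0..1} (\<lambda>x. G (x - eps) * \<psi> x) = integral {-eps..-eps+1} g_shift"
    using integral_shift_real_ivl[of 0 eps 1 "\<lambda>x. G (x - eps) * \<psi> x"] by (simp add: g_shift_def[abs_def])
  also have "\<dots> = integral {0..1} g_shift"
  proof (rule integral_periodic_Icc[OF _ int(3)])
    show "g_shift (x + 1) = g_shift x" for x
      using G_per[of x] \<psi>_per[of "x + eps"] by (simp add: g_shift_def add_ac)
  qed
  finally have shift: "integral {0..1} (\<lambda>x. G (x - eps) * \<psi> x) = integral {0..1} g_shift" .
  have "integral {0..1} (\<lambda>x. (G (x - eps) - G x) / eps * \<psi> x)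
      = integral {0..1} (\<lambda>x. G (x - eps) * \<psi> x - g x) / eps"
    by (simp add: g_def left_diff_distrib flip: integral_divide)
  also have "\<dots> = integral {0..1} (\<lambda>x. g_shift x - g x) / eps"
    using integral_diff[OF int(1,2)] integral_diff[OF int(3,2)] shift by simp
  finally have eq: "integral {0..1} (\<lambda>x. (G (x - eps) - G x) / eps * \<psi> x)
      = integral {0..1} (\<lambda>x. G x * (\<psi> (x + eps) - \<psi> x)) / eps"
    by (simp add: g_def g_shift_def right_diff_distrib)
  have bound: "\<bar>G x * (\<psi> (x + eps) - \<psi> x)\<bar> \<le> N * (P * eps)" for x
    unfolding abs_mult using G_bound lipschitz_onD[OF \<psi>_lip, of "x + eps" x] eps
    by (intro mult_mono) (auto simp: dist_real_def intro: order_trans[OF abs_ge_zero])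
  have "(\<lambda>x. G x * (\<psi> (x + eps) - \<psi> x)) integrable_on {0..1}"
    using integrable_diff[OF int(3,2)] by (simp add: g_def g_shift_def right_diff_distrib)
  then have "norm (integral {0..1} (\<lambda>x. G x * (\<psi> (x + eps) - \<psi> x)))
      \<le> integral {0..1::real} (\<lambda>_. N * (P * eps))"
    by (rule integral_norm_bound_integral[OF _ integrable_const_ivl]) (simp add: bound)
  then show ?thesis using eps unfolding eq by (simp add: pos_divide_le_eq abs_divide mult.assoc)
qed

lemma abs_integral_num_flux_difference_le:
  assumes "loc_lipschitz H" "admissible_recon R S"
    and "v \<in> borel_measurable borel" "\<And>x. v (x + 1) = v x" "\<And>x. \<bar>v x\<bar> \<le> M"
    and "bdd_above (N_set H k R S M)"
    and "\<And>x. \<psi> (x + 1) = \<psi> x" "P-lipschitz_on UNIV \<psi>" "eps > 0"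
  shows "\<bar>integral {0..1} (\<lambda>x. (num_flux H k R S eps v (x - eps) - num_flux H k R S eps v x) / eps * \<psi> x)\<bar>
    \<le> Sup (N_set H k R S M) * P"
  using assms
  by (intro abs_integral_flux_difference_le borel_measurable_num_flux num_flux_periodic abs_num_flux_le)

lemma has_real_derivative_integral_Lipschitz:
  fixes w :: "real \<Rightarrow> real \<Rightarrow> real" and w' :: "real \<Rightarrow> real"
  assumes s: "s \<in> T"
    and deriv: "\<And>x. ((\<lambda>r. w x r) has_real_derivative w' x) (at s within T)"
    and lip: "\<And>x r. r \<in> T \<Longrightarrow> \<bar>w x r - w x s\<bar> \<le> C * \<bar>r - s\<bar>"
    and int: "\<And>r. r \<in> T \<Longrightarrow> (\<lambda>x. w x r) integrable_on {a..b}"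
  shows "((\<lambda>r. integral {a..b} (\<lambda>x. w x r)) has_real_derivative integral {a..b} w') (at s within T)"
  unfolding has_field_derivative_iff tendsto_at_iff_sequentially
proof (intro allI impI)
  fix X :: "nat \<Rightarrow> real" assume X: "\<forall>n. X n \<in> T - {s}" and lim: "X \<longlonglongrightarrow> s"
  define q where "q n x = (w x (X n) - w x s) / (X n - s)" for n x
  have q_int: "q n integrable_on {a..b}" for n
    unfolding q_def using X s by (intro integrable_on_divide integrable_diff int) auto
  have q_bound: "norm (q n x) \<le> C" for n x
    using lip[of "X n" x] X by (auto simp: q_def abs_divide divide_le_eq)
  have q_lim: "(\<lambda>n. q n x) \<longlonglongrightarrow> w' x" for x
    using deriv[of x] X lim unfolding has_field_derivative_iff tendsto_at_iff_sequentially q_def o_def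
    by blast
  have "(\<lambda>n. integral {a..b} (q n)) \<longlonglongrightarrow> integral {a..b} w'"
    by (rule dominated_convergence(2)[OF q_int integrable_const_ivl q_bound q_lim])
  moreover have "integral {a..b} (q n)
      = (integral {a..b} (\<lambda>x. w x (X n)) - integral {a..b} (\<lambda>x. w x s)) / (X n - s)" for n
    unfolding q_def using X s by (simp add: integral_diff int)
  ultimately show "((\<lambda>r. (integral {a..b} (\<lambda>x. w x r) - integral {a..b} (\<lambda>x. w x s)) / (r - s)) \<circ> X)
      \<longlonglongrightarrow> integral {a..b} w'"
    by (simp add: o_def)
qed

lemma abs_set_integral_increment_le:
  fixes w D :: "real \<Rightarrow> real \<Rightarrow> real" and \<psi> :: "real \<Rightarrow> real"
  assumes deriv: "\<And>x s. s \<ge> 0 \<Longrightarrow> ((\<lambda>s. w x s) has_real_derivative D x s) (at s within {0..})"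
    and D_bound: "\<And>x s. s \<ge> 0 \<Longrightarrow> \<bar>D x s\<bar> \<le> C"
    and \<psi>_bound: "\<And>x. \<bar>\<psi> x\<bar> \<le> B"
    and int: "\<And>s. s \<ge> 0 \<Longrightarrow> set_integrable lborel {a..b} (\<lambda>x. w x s * \<psi> x)"
    and K: "\<And>s. s \<ge> 0 \<Longrightarrow> \<bar>integral {a..b} (\<lambda>x. D x s * \<psi> x)\<bar> \<le> K"
    and "t \<ge> 0" "t' \<ge> 0"
  shows "\<bar>LBINT x:{a..b}. (w x t' - w x t) * \<psi> x\<bar> \<le> K * \<bar>t' - t\<bar>"
proof -
  let ?I = "\<lambda>s. integral {a..b} (\<lambda>x. w x s * \<psi> x)"
  have lip: "\<bar>w x r * \<psi> x - w x s * \<psi> x\<bar> \<le> (C * B) * \<bar>r - s\<bar>" if "r \<ge> 0" "s \<ge> 0" for x r s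
  proof -
    have "\<bar>w x r - w x s\<bar> \<le> C * \<bar>r - s\<bar>"
      unfolding real_norm_def[symmetric]
      by (rule field_differentiable_bound[of "{0..}"]) (use that deriv D_bound in auto)
    then have "\<bar>w x r - w x s\<bar> * \<bar>\<psi> x\<bar> \<le> (C * \<bar>r - s\<bar>) * B"
      using \<psi>_bound[of x] by (intro mult_mono) (auto intro: order_trans[OF abs_ge_zero])
    then show ?thesis by (simp add: abs_mult mult_ac flip: left_diff_distrib right_diff_distrib)
  qed
  have I_deriv: "(?I has_real_derivative integral {a..b} (\<lambda>x. D x s * \<psi> x)) (at s within {0..})"
    if "s \<ge> 0" for s
    using that set_borel_integral_eq_integral(1)[OF int]
    by (intro has_real_derivative_integral_Lipschitz[where C = "C * B"] DERIV_cmult_right deriv lip) auto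
  have "\<bar>?I t' - ?I t\<bar> \<le> K * \<bar>t' - t\<bar>"
    unfolding real_norm_def[symmetric]
    by (rule field_differentiable_bound[of "{0..}" ?I]) (use I_deriv K assms(6,7) in auto)
  moreover have "(LBINT x:{a..b}. (w x t' - w x t) * \<psi> x) = ?I t' - ?I t"
    using int[of t] int[of t'] assms(6,7)
    by (simp add: left_diff_distrib set_integral_diff set_borel_integral_eq_integral(2))
  ultimately show ?thesis by simp
qed

theorem lemma2:
  fixes H :: "real \<Rightarrow> real" and u0 :: "real \<Rightarrow> real"
    and u :: "real \<Rightarrow> real \<Rightarrow> real"  \<comment> \<open>u x t, for the fixed eps\<close>
    and R :: "real list \<Rightarrow> real" and S :: "int list"
    and \<phi> \<phi>' :: "real \<Rightarrow> real"
    and a k eps t \<Delta>t :: real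
  assumes H_lip: "loc_lipschitz H"
    and a_pos: "a > 0" and k_nonneg: "k \<ge> 0" and eps_pos: "eps > 0"
    and recon: "admissible_recon R S"
    and u0_per: "\<And>x. u0 (x + 1) = u0 x"
    and u0_bdd: "bounded (range u0)"
    and u_per: "\<And>x t. t \<ge> 0 \<Longrightarrow> u (x + 1) t = u x t"
    and u_meas: "\<And>t. t \<ge> 0 \<Longrightarrow> (\<lambda>x. u x t) \<in> borel_measurable borel"
    and u_init: "\<And>x. u x 0 = u0 x"
    and u_pos: "\<And>x t. t \<ge> 0 \<Longrightarrow> u x t > a"
    and u_bound: "\<And>x t. t \<ge> 0 \<Longrightarrow> \<bar>u x t\<bar> \<le> sup_norm u0"
    and u_ode: "\<And>x t. t \<ge> 0 \<Longrightarrow>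
      ((\<lambda>s. u x s) has_real_derivative
         (1 / eps) * ( u (x - eps) t * fplus H k (recon_plus R S eps (\<lambda>y. u y t) (x - eps))
                     - u x t * fplus H k (recon_plus R S eps (\<lambda>y. u y t) x)
                     - u x t * fminus H k (recon_plus R S eps (\<lambda>y. u y t) (x - eps))
                     + u (x + eps) t * fminus H k (recon_plus R S eps (\<lambda>y. u y t) x)))
       (at t within {0..})"
    and phi_per: "\<And>x. \<phi> (x + 1) = \<phi> x"
    and phi_deriv: "\<And>x. (\<phi> has_real_derivative \<phi>' x) (at x)"
    and phi'_cont: "continuous_on UNIV \<phi>'"
    and N_bdd: "bdd_above (N_set H k R S (sup_norm u0))"
    and t_nonneg: "t \<ge> 0" and dt_pos: "\<Delta>t > 0"
  shows "(\<integral>x\<in>{0..1}. (u x (t + \<Delta>t) - u x t) * \<phi> x \<partial>lborel)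
           \<le> Sup (N_set H k R S (sup_norm u0)) * sup_norm \<phi>' * \<Delta>t * measure lborel {0..(1::real)}"
proof -
  define N where "N = Sup (N_set H k R S (sup_norm u0))"
  define P where "P = sup_norm \<phi>'"
  define G where "G s = num_flux H k R S eps (\<lambda>y. u y s)" for s
  have conservative: "((\<lambda>s. u x s) has_real_derivative (G s (x - eps) - G s x) / eps) (at s within {0..})"
    if "s \<ge> 0" for x s
    using u_ode[OF that, of x] by (simp add: G_def num_flux_def divide_inverse algebra_simps)
  \<comment> \<open>Only the bound on \<open>\<bar>u\<bar>\<close> enters: the flux bound is the triangle inequality.\<close>
  have G_bound: "\<bar>G s x\<bar> \<le> N" if "s \<ge> 0" for s x
    unfolding G_def N_def by (rule abs_num_flux_le[OF u_bound[OF that] N_bdd])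
  have \<phi>_lip: "P-lipschitz_on UNIV \<phi>"
    unfolding P_def by (rule periodic_C1_lipschitz[OF phi_per phi_deriv phi'_cont])
  have \<phi>_cont: "continuous_on UNIV \<phi>" by (rule lipschitz_on_continuous_on[OF \<phi>_lip])
  have \<phi>_bound: "\<bar>\<phi> x\<bar> \<le> sup_norm \<phi>" for x by (rule periodic_abs_le_sup_norm[OF phi_per \<phi>_cont])
  have [measurable]: "\<phi> \<in> borel_measurable borel" by (rule borel_measurable_continuous_onI[OF \<phi>_cont])
  have [measurable]: "(\<lambda>x. u x s) \<in> borel_measurable borel" if "s \<ge> 0" for s by (rule u_meas[OF that])
  have "\<bar>LBINT x:{0..1}. (u x (t + \<Delta>t) - u x t) * \<phi> x\<bar> \<le> N * P * \<bar>t + \<Delta>t - t\<bar>"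
  proof (rule abs_set_integral_increment_le[OF conservative _ \<phi>_bound])
    show "\<bar>(G s (x - eps) - G s x) / eps\<bar> \<le> 2 * N / eps" if "s \<ge> 0" for x s
      using G_bound[OF that, of x] G_bound[OF that, of "x - eps"] eps_pos
      by (simp add: abs_divide divide_right_mono)
    show "set_integrable lborel {0..1} (\<lambda>x. u x s * \<phi> x)" if "s \<ge> 0" for s
      using that by (intro set_integrable_bounded_Icc[where B = "sup_norm u0 * sup_norm \<phi>"])
        (measurable, simp add: abs_mult mult_mono' u_bound \<phi>_bound)
    show "\<bar>integral {0..1} (\<lambda>x. (G s (x - eps) - G s x) / eps * \<phi> x)\<bar> \<le> N * P" if "s \<ge> 0" for s
      unfolding G_def N_def using that
      by (intro abs_integral_num_flux_difference_le H_lip recon u_meas u_per u_bound N_bdd phi_per \<phi>_lip eps_pos)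
  qed (use t_nonneg dt_pos in auto)
  then show ?thesis
    using dt_pos by (simp add: N_def P_def abs_le_iff)
qed

end
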